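(* Let $\alpha=(\alpha_1,\dots,\alpha_L)$ be a weak composition, $n$ a positive integer and $B\in\mathrm{GMLQ}(\alpha,n)$ with labelling $L_G(B)$. Then: (i) within each row of $L_G(B)$, the largest label of an anti-particle is strictly smaller than the smallest label of a particle; (ii) if $\alpha_1\ge\alpha_2\ge\cdots\ge\alpha_L$, then the labels of the particles in $L_G(B)$ coincide with the Ferrari–Martin labels of $B$, and for each $1\le r\le L$ every anti-particle in row $r$ of $L_G(B)$ has label $r-1$.
   Context: $\mathrm{GMLQ}(\alpha,n)$ is the set of tuples $B=(B_1,\dots,B_L)$ of subsets of $[n]$ with $|B_j|=\alpha_j$, drawn with rows $1..L$ bottom to top and columns $1..n$ left to right; cells $(r,j)$ with $j\in B_r$ are particles (balls), the others anti-particles. Labelling $L_G(B)$: row $L$: particles get label $L$, anti-particles $L-1$. For $r=L-1,\dots,1$: with $w_1,\dots,w_n$ the labels of row $r+1$, order the columns $i_1,\dots,i_n$ so that $w_{i_1}\ge\cdots\ge w_{i_n}$, ties by increasing column index; let $s=|B_r|$. Particle phase: for $k=1,\dots,s$, the first unlabelled particle of row $r$ weakly to the right of column $i_k$ cyclically ($i_k,i_k+1,\dots,n,1,\dots$) gets label $w_{i_k}$. Anti-particle phase: for $k=n,n-1,\dots,s+1$, the first unlabelled anti-particle of row $r$ weakly to the left of column $i_k$ cyclically ($i_k,i_k-1,\dots,1,n,\dots$) gets label $w_{i_k}-1$. Ferrari–Martin labels (for $\alpha$ weakly decreasing): for $r=L,\dots,2$, every unlabelled ball of row $r$ gets label $r$;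 then the balls of row $r$, in decreasing label order (left to right among ties), are each paired with the first unlabelled ball of row $r-1$ weakly to the right cyclically modulo $n$, which gets the same label; finally unlabelled balls of row 1 get label 1. *)

theory Defs
  imports Main "HOL-Library.Product_Lexorder"
begin

text \<open>Configurations: a list B of length L; row r (1-based) is B ! (r-1), a subset of {1..n}.\<close>

definition GMLQ :: "nat list \<Rightarrow> nat \<Rightarrow> nat set list set" where
  "GMLQ \<alpha> n = {B. length B = length \<alpha> \<and>
      (\<forall>r < length \<alpha>. B ! r \<subseteq> {1..n} \<and> card (B ! r) = \<alpha> ! r)}"

definition cyc_right :: "nat \<Rightarrow> nat \<Rightarrow> nat list" where
  "cyc_right n i = [i..<n+1] @ [1..<i]"

definition cyc_left :: "nat \<Rightarrow> nat \<Rightarrow> nat list" where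
  "cyc_left n i = rev [1..<i+1] @ rev [i+1..<n+1]"

definition col_order :: "nat \<Rightarrow> (nat \<Rightarrow> int) \<Rightarrow> nat list" where
  "col_order n w = sort_key (\<lambda>i. (- w i, i)) [1..<n+1]"

definition place_particle :: "nat \<Rightarrow> nat set \<Rightarrow> (nat \<Rightarrow> int) \<Rightarrow> (nat \<rightharpoonup> int) \<Rightarrow> nat \<Rightarrow> (nat \<rightharpoonup> int)" where
  "place_particle n S w lab i =
     (case find (\<lambda>j. j \<in> S \<and> lab j = None) (cyc_right n i) of
        Some j \<Rightarrow> lab(j \<mapsto> w i) | None \<Rightarrow> lab)"

definition place_anti :: "nat \<Rightarrow> nat set \<Rightarrow> (nat \<Rightarrow> int) \<Rightarrow> (nat \<rightharpoonup> int) \<Rightarrow> nat \<Rightarrow> (nat \<rightharpoonup> int)" where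
  "place_anti n S w lab i =
     (case find (\<lambda>j. j \<notin> S \<and> lab j = None) (cyc_left n i) of
        Some j \<Rightarrow> lab(j \<mapsto> w i - 1) | None \<Rightarrow> lab)"

text \<open>Labels of row r from the labels w of row r+1 and the particle set S of row r.\<close>
definition row_step :: "nat \<Rightarrow> (nat \<Rightarrow> int) \<Rightarrow> nat set \<Rightarrow> (nat \<Rightarrow> int)" where
  "row_step n w S =
     (let ord = col_order n w; s = card S;
          lab1 = fold (\<lambda>i lab. place_particle n S w lab i) (take s ord) Map.empty;
          lab2 = fold (\<lambda>i lab. place_anti n S w lab i) (rev (drop s ord)) lab1
      in (\<lambda>j. case lab2 j of Some x \<Rightarrow> x | None \<Rightarrow> 0))"

text \<open>LG n B r j: label of cell (r,j) in the labelling L_G(B), rows 1..length B.\<close>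
function LG :: "nat \<Rightarrow> nat set list \<Rightarrow> nat \<Rightarrow> nat \<Rightarrow> int" where
  "LG n B r = (if length B \<le> r
      then (\<lambda>j. if j \<in> B ! (length B - 1) then int (length B) else int (length B) - 1)
      else row_step n (LG n B (Suc r)) (B ! (r - 1)))"
  by pat_completeness auto
termination by (relation "measure (\<lambda>(n, B, r). length B - r)") auto

definition fm_place :: "nat \<Rightarrow> nat set \<Rightarrow> (nat \<Rightarrow> int) \<Rightarrow> (nat \<rightharpoonup> int) \<Rightarrow> nat \<Rightarrow> (nat \<rightharpoonup> int)" where
  "fm_place n S w m i =
     (case find (\<lambda>j. j \<in> S \<and> m j = None) (cyc_right n i) of
        Some j \<Rightarrow> m(j \<mapsto> w i) | None \<Rightarrow> m)"

text \<open>FM n B r j: Ferrari--Martin label of the ball at (r,j) (meaningful for j \<in> B ! (r-1)).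
  Balls of row r not reached by the pairing from row r+1 get label r.\<close>
function FM :: "nat \<Rightarrow> nat set list \<Rightarrow> nat \<Rightarrow> nat \<Rightarrow> int" where
  "FM n B r = (if length B \<le> r then (\<lambda>j. int r)
      else (let w = FM n B (Suc r);
                m = fold (\<lambda>i m. fm_place n (B ! (r - 1)) w m i)
                      (sort_key (\<lambda>i. (- w i, i)) (sorted_list_of_set (B ! r))) Map.empty
            in (\<lambda>j. case m j of Some x \<Rightarrow> x | None \<Rightarrow> int r)))"
  by pat_completeness auto
termination by (relation "measure (\<lambda>(n, B, r). length B - r)") auto

end

theory Submission
  imports Defs
begin

text \<open>
  Both phases of a row step, and the Ferrari--Martin pairing, are one greedy procedure: the
  columns, in a prescribed order, each claim the first unclaimed admissible cell along a cyclic
  scan of all n columns. While there are at least as many admissible cells as claimers every claim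
  succeeds, so the particles of row r are labelled from the first |B_r| columns of the decreasing
  column order and the anti-particles from the remaining ones; this gives (i).

  For (ii) one shows by downward induction on r that the particles of row r carry their
  Ferrari--Martin labels, all at least r, and the anti-particles carry r - 1. Then the column
  order of row r + 1 lists its particles first, in Ferrari--Martin order, so, as
  |B_(r+1)| <= |B_r|, the particle phase of row r performs exactly the Ferrari--Martin pairing and
  then labels the unpaired particles with r, while the anti-particle phase only uses columns
  labelled r.
\<close>

lemma find_SomeD: "find P xs = Some x \<Longrightarrow> x \<in> set xs \<and> P x"
  by (induction xs) (auto split: if_splits)

definition claim_first ::
    "('a \<Rightarrow> bool) \<Rightarrow> ('i \<Rightarrow> 'a list) \<Rightarrow> ('i \<Rightarrow> 'b) \<Rightarrow> ('a \<rightharpoonup> 'b) \<Rightarrow> 'i \<Rightarrow> ('a \<rightharpoonup> 'b)" where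
  "claim_first P scan v lab i =
     (case find (\<lambda>j. P j \<and> lab j = None) (scan i) of
        Some j \<Rightarrow> lab(j \<mapsto> v i) | None \<Rightarrow> lab)"

definition greedy_fill ::
    "('a \<Rightarrow> bool) \<Rightarrow> ('i \<Rightarrow> 'a list) \<Rightarrow> ('i \<Rightarrow> 'b) \<Rightarrow> 'i list \<Rightarrow> ('a \<rightharpoonup> 'b) \<Rightarrow> ('a \<rightharpoonup> 'b)" where
  "greedy_fill P scan v xs lab = fold (\<lambda>i lab. claim_first P scan v lab i) xs lab"

lemma greedy_fill_Nil [simp]: "greedy_fill P scan v [] lab = lab"
  by (simp add: greedy_fill_def)

lemma greedy_fill_Cons [simp]:
  "greedy_fill P scan v (i # xs) lab = greedy_fill P scan v xs (claim_first P scan v lab i)"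
  by (simp add: greedy_fill_def)

lemma greedy_fill_append:
  "greedy_fill P scan v (xs @ ys) lab = greedy_fill P scan v ys (greedy_fill P scan v xs lab)"
  by (simp add: greedy_fill_def)

lemma claim_first_keeps: "lab j = Some x \<Longrightarrow> claim_first P scan v lab i j = Some x"
  by (auto simp: claim_first_def split: option.split dest: find_SomeD)

lemma greedy_fill_keeps: "lab j = Some x \<Longrightarrow> greedy_fill P scan v xs lab j = Some x"
  by (induction xs arbitrary: lab) (simp_all add: claim_first_keeps)

lemma dom_greedy_fill_mono: "dom lab \<subseteq> dom (greedy_fill P scan v xs lab)"
proof
  fix j assume "j \<in> dom lab"
  then show "j \<in> dom (greedy_fill P scan v xs lab)"
    using greedy_fill_keeps by fastforce
qed

lemma claim_first_SomeD:
  "claim_first P scan v lab i j = Some x \<Longrightarrow> lab j = None \<Longrightarrow> P j \<and> x = v i"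
  by (auto simp: claim_first_def split: option.splits if_splits dest: find_SomeD)

lemma greedy_fill_SomeD:
  "greedy_fill P scan v xs lab j = Some x \<Longrightarrow> lab j = None \<Longrightarrow> \<exists>i \<in> set xs. P j \<and> x = v i"
proof (induction xs arbitrary: lab)
  case (Cons i xs)
  show ?case
  proof (cases "claim_first P scan v lab i j")
    case None
    then show ?thesis using Cons by auto
  next
    case (Some y)
    then have "greedy_fill P scan v xs (claim_first P scan v lab i) j = Some y"
      by (rule greedy_fill_keeps)
    then show ?thesis using Cons.prems claim_first_SomeD[OF Some] by auto
  qed
qed simp

lemma dom_greedy_fill_subset:
  "dom (greedy_fill P scan v xs Map.empty) \<subseteq> {j. P j}"
  using greedy_fill_SomeD by fastforce

lemma greedy_fill_cong:
  "\<forall>i \<in> set xs. v i = v' i \<Longrightarrow> greedy_fill P scan v xs lab = greedy_fill P scan v' xs lab"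
  by (induction xs arbitrary: lab) (auto simp: claim_first_def split: option.split)

lemma greedy_fill_covers:
  assumes "finite T" and "\<forall>i \<in> set xs. {j \<in> set (scan i). P j} = T"
    and "card T \<le> card (T \<inter> dom lab) + length xs"
  shows "T \<subseteq> dom (greedy_fill P scan v xs lab)"
  using assms(2,3)
proof (induction xs arbitrary: lab)
  case Nil
  then have "T \<inter> dom lab = T"
    by (intro card_seteq[OF assms(1)]) auto
  then show ?case by auto
next
  case (Cons i xs)
  show ?case
  proof (cases "T \<subseteq> dom lab")
    case True
    then show ?thesis by (rule order_trans[OF _ dom_greedy_fill_mono])
  next
    case False
    then obtain j where j: "j \<in> T" "lab j = None" by auto
    have scan_i: "{j \<in> set (scan i). P j} = T"
      using Cons.prems(1) by simp
    then have "find (\<lambda>j. P j \<and> lab j = None) (scan i) \<noteq> None"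
      using j by (auto simp: find_None_iff)
    then obtain j' where found: "find (\<lambda>j. P j \<and> lab j = None) (scan i) = Some j'"
      by auto
    then have j': "j' \<in> T" "lab j' = None"
      using scan_i find_SomeD[OF found] by auto
    have "claim_first P scan v lab i = lab(j' \<mapsto> v i)"
      using found by (simp add: claim_first_def)
    then have "T \<inter> dom (claim_first P scan v lab i) = insert j' (T \<inter> dom lab)"
      using j' by auto
    moreover have "j' \<notin> T \<inter> dom lab"
      using j' by auto
    ultimately have "card (T \<inter> dom (claim_first P scan v lab i)) = Suc (card (T \<inter> dom lab))"
      using assms(1) by simp
    then show ?thesis
      using Cons.IH[of "claim_first P scan v lab i"] Cons.prems by simp
  qed
qed

lemma place_particle_eq_claim_first:
  "place_particle n S w = claim_first (\<lambda>j. j \<in> S) (cyc_right n) w"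
  by (intro ext) (simp add: place_particle_def claim_first_def)

lemma place_anti_eq_claim_first:
  "place_anti n S w = claim_first (\<lambda>j. j \<notin> S) (cyc_left n) (\<lambda>i. w i - 1)"
  by (intro ext) (simp add: place_anti_def claim_first_def)

lemma fm_place_eq_claim_first:
  "fm_place n S w = claim_first (\<lambda>j. j \<in> S) (cyc_right n) w"
  by (intro ext) (simp add: fm_place_def claim_first_def)

lemma set_cyc_right: "i \<in> {1..n} \<Longrightarrow> set (cyc_right n i) = {1..n}"
  by (auto simp: cyc_right_def)

lemma set_cyc_left: "i \<in> {1..n} \<Longrightarrow> set (cyc_left n i) = {1..n}"
  by (auto simp: cyc_left_def)

lemma set_col_order [simp]: "set (col_order n w) = {1..n}"
  by (auto simp: col_order_def)

lemma length_col_order [simp]: "length (col_order n w) = n"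
  by (simp add: col_order_def)

lemma distinct_col_order [simp]: "distinct (col_order n w)"
  by (simp add: col_order_def)

lemma sorted_col_order: "sorted (map (\<lambda>i. (- w i, i)) (col_order n w))"
  by (simp add: col_order_def)

definition particle_phase :: "nat \<Rightarrow> (nat \<Rightarrow> int) \<Rightarrow> nat set \<Rightarrow> (nat \<rightharpoonup> int)" where
  "particle_phase n w S =
     greedy_fill (\<lambda>j. j \<in> S) (cyc_right n) w (take (card S) (col_order n w)) Map.empty"

definition row_labels :: "nat \<Rightarrow> (nat \<Rightarrow> int) \<Rightarrow> nat set \<Rightarrow> (nat \<rightharpoonup> int)" where
  "row_labels n w S =
     greedy_fill (\<lambda>j. j \<notin> S) (cyc_left n) (\<lambda>i. w i - 1) (rev (drop (card S) (col_order n w)))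
       (particle_phase n w S)"

lemma row_step_eq_row_labels:
  "row_step n w S j = (case row_labels n w S j of Some x \<Rightarrow> x | None \<Rightarrow> 0)"
  by (simp add: row_step_def row_labels_def particle_phase_def greedy_fill_def Let_def
      place_particle_eq_claim_first place_anti_eq_claim_first)

lemma particle_phase_covers:
  assumes "S \<subseteq> {1..n}"
  shows "S \<subseteq> dom (particle_phase n w S)"
  unfolding particle_phase_def
proof (rule greedy_fill_covers)
  show "finite S"
    using assms finite_subset by blast
  show "\<forall>i \<in> set (take (card S) (col_order n w)). {j \<in> set (cyc_right n i). j \<in> S} = S"
    using assms by (auto dest!: in_set_takeD simp: set_cyc_right)
  have "card S \<le> n"
    using card_mono[OF _ assms] by simp
  then show "card S \<le> card (S \<inter> dom Map.empty) + length (take (card S) (col_order n w))"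
    by simp
qed

lemma particle_phase_eq_row_step:
  assumes "S \<subseteq> {1..n}" and "j \<in> S"
  shows "particle_phase n w S j = Some (row_step n w S j)"
proof -
  obtain x where x: "particle_phase n w S j = Some x"
    using particle_phase_covers[OF assms(1)] assms(2) by blast
  then have "row_labels n w S j = Some x"
    unfolding row_labels_def by (rule greedy_fill_keeps)
  then show ?thesis
    using x by (simp add: row_step_eq_row_labels)
qed

lemma row_step_particle_label:
  assumes "S \<subseteq> {1..n}" and "j \<in> S"
  shows "\<exists>i \<in> set (take (card S) (col_order n w)). row_step n w S j = w i"
  using greedy_fill_SomeD[OF particle_phase_eq_row_step[OF assms, unfolded particle_phase_def]] by auto

lemma row_step_anti_label:
  assumes S: "S \<subseteq> {1..n}" and j: "j \<in> {1..n} - S"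
  shows "\<exists>i \<in> set (drop (card S) (col_order n w)). row_step n w S j = w i - 1"
proof -
  have "finite S"
    using S finite_subset by blast
  have dom_particles: "dom (particle_phase n w S) \<subseteq> S"
    unfolding particle_phase_def using dom_greedy_fill_subset by fastforce
  have "{1..n} - S \<subseteq> dom (row_labels n w S)"
    unfolding row_labels_def
  proof (rule greedy_fill_covers)
    show "\<forall>i \<in> set (rev (drop (card S) (col_order n w))).
        {j \<in> set (cyc_left n i). j \<notin> S} = {1..n} - S"
      by (auto dest!: in_set_dropD simp: set_cyc_left)
    have "card ({1..n} - S) = n - card S"
      using S \<open>finite S\<close> by (simp add: card_Diff_subset)
    moreover have "({1..n} - S) \<inter> dom (particle_phase n w S) = {}"
      using dom_particles by auto
    ultimately show "card ({1..n} - S)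
        \<le> card (({1..n} - S) \<inter> dom (particle_phase n w S)) + length (rev (drop (card S) (col_order n w)))"
      by simp
  qed simp
  then obtain x where x: "row_labels n w S j = Some x"
    using j by blast
  have "particle_phase n w S j = None"
    using dom_particles j by auto
  from greedy_fill_SomeD[OF x[unfolded row_labels_def] this]
  obtain i where "i \<in> set (drop (card S) (col_order n w))" "x = w i - 1"
    by auto
  then show ?thesis
    using x by (auto simp: row_step_eq_row_labels)
qed

lemma col_order_take_drop_le:
  assumes "i \<in> set (take k (col_order n w))" and "i' \<in> set (drop k (col_order n w))"
  shows "w i' \<le> w i"
proof -
  have "sorted (map (\<lambda>i. (- w i, i)) (take k (col_order n w))
      @ map (\<lambda>i. (- w i, i)) (drop k (col_order n w)))"
    using sorted_col_order by (metis append_take_drop_id map_append)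
  then have "(- w i, i) \<le> (- w i', i')"
    using assms by (auto simp: sorted_append)
  then show ?thesis
    by (auto simp: less_eq_prod_def)
qed

lemma row_step_anti_less_particle:
  assumes "S \<subseteq> {1..n}" and "j \<in> S" and "j' \<in> {1..n} - S"
  shows "row_step n w S j' < row_step n w S j"
proof -
  obtain i where "i \<in> set (take (card S) (col_order n w))" "row_step n w S j = w i"
    using row_step_particle_label[OF assms(1,2)] by blast
  moreover obtain i' where "i' \<in> set (drop (card S) (col_order n w))" "row_step n w S j' = w i' - 1"
    using row_step_anti_label[OF assms(1,3)] by blast
  ultimately show ?thesis
    using col_order_take_drop_le by fastforce
qed

lemma col_order_eq_filter_append:
  assumes "\<forall>i \<in> S. \<forall>i' \<in> {1..n} - S. w i' < w i"
  shows "col_order n w = filter (\<lambda>i. i \<in> S) (col_order n w) @ filter (\<lambda>i. i \<notin> S) (col_order n w)"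
    (is "?ord = ?P @ ?Q")
proof (rule map_sorted_distinct_set_unique[where f = "\<lambda>i. (- w i, i)"])
  have inj: "inj (\<lambda>i. (- w i, i))"
    by (auto simp: inj_def)
  then show "inj_on (\<lambda>i. (- w i, i)) (set ?ord \<union> set (?P @ ?Q))"
    by (rule inj_on_subset) simp
  show "sorted (map (\<lambda>i. (- w i, i)) ?ord)"
    by (rule sorted_col_order)
  show "sorted (map (\<lambda>i. (- w i, i)) (?P @ ?Q))"
    using sorted_filter[OF sorted_col_order] assms by (fastforce simp: sorted_append)
  show "distinct (map (\<lambda>i. (- w i, i)) ?ord)" "distinct (map (\<lambda>i. (- w i, i)) (?P @ ?Q))"
    using inj by (auto simp: distinct_map intro: inj_on_subset)
  show "set ?ord = set (?P @ ?Q)"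
    by auto
qed

lemma filter_col_order_eq_sort_key:
  assumes "S \<subseteq> {1..n}" and "\<forall>i \<in> S. w i = w' i"
  shows "filter (\<lambda>i. i \<in> S) (col_order n w) = sort_key (\<lambda>i. (- w' i, i)) (sorted_list_of_set S)"
    (is "?P = ?F")
proof (rule map_sorted_distinct_set_unique[where f = "\<lambda>i. (- w' i, i)"])
  have inj: "inj (\<lambda>i. (- w' i, i))"
    by (auto simp: inj_def)
  then show "inj_on (\<lambda>i. (- w' i, i)) (set ?P \<union> set ?F)"
    by (rule inj_on_subset) simp
  have "map (\<lambda>i. (- w' i, i)) ?P = map (\<lambda>i. (- w i, i)) ?P"
    using assms(2) by simp
  then show "sorted (map (\<lambda>i. (- w' i, i)) ?P)"
    using sorted_filter[OF sorted_col_order] by metis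
  show "sorted (map (\<lambda>i. (- w' i, i)) ?F)"
    by (rule sorted_sort_key)
  show "distinct (map (\<lambda>i. (- w' i, i)) ?P)" "distinct (map (\<lambda>i. (- w' i, i)) ?F)"
    using inj by (auto simp: distinct_map intro: inj_on_subset)
  have "finite S"
    using assms(1) finite_subset by blast
  then show "set ?P = set ?F"
    using assms(1) by auto
qed

lemma col_order_staircase:
  assumes "S \<subseteq> {1..n}" and "\<forall>i \<in> S. c < w i" and "\<forall>i \<in> {1..n} - S. w i = c"
    and "card S \<le> k"
  obtains Q where "take k (col_order n w) = filter (\<lambda>i. i \<in> S) (col_order n w) @ Q"
    and "\<forall>i \<in> set Q. w i = c" and "\<forall>i \<in> set (drop k (col_order n w)). w i = c"
proof -
  define P where "P = filter (\<lambda>i. i \<in> S) (col_order n w)"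
  define Q where "Q = filter (\<lambda>i. i \<notin> S) (col_order n w)"
  have split: "col_order n w = P @ Q"
    unfolding P_def Q_def using assms(2,3) by (intro col_order_eq_filter_append) auto
  have "set P = S"
    using assms(1) by (auto simp: P_def)
  then have "length P = card S"
    using distinct_card[of P] by (simp add: P_def)
  then have "take k (col_order n w) = P @ take (k - card S) Q"
    and "drop k (col_order n w) = drop (k - card S) Q"
    using split assms(4) by simp_all
  moreover have "\<forall>i \<in> set Q. w i = c"
    using assms(3) by (auto simp: Q_def)
  ultimately show ?thesis
    using that[of "take (k - card S) Q"] unfolding P_def by (auto dest: in_set_takeD in_set_dropD)
qed

lemma row_step_anti_staircase:
  assumes "S \<subseteq> {1..n}" and "S' \<subseteq> {1..n}" and "card S' \<le> card S"
    and "\<forall>i \<in> S'. c < w i" and "\<forall>i \<in> {1..n} - S'. w i = c"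
    and "j \<in> {1..n} - S"
  shows "row_step n w S j = c - 1"
proof -
  obtain i where "i \<in> set (drop (card S) (col_order n w))" "row_step n w S j = w i - 1"
    using row_step_anti_label[OF assms(1,6)] by blast
  moreover obtain Q where "\<forall>i \<in> set (drop (card S) (col_order n w)). w i = c"
    using col_order_staircase[OF assms(2,4,5,3)] by blast
  ultimately show ?thesis
    by simp
qed

lemma row_step_particle_staircase:
  assumes "S \<subseteq> {1..n}" and "S' \<subseteq> {1..n}" and "card S' \<le> card S"
    and "\<forall>i \<in> S'. c < w i" and "\<forall>i \<in> {1..n} - S'. w i = c"
    and "\<forall>i \<in> S'. w i = w' i" and "j \<in> S"
  shows "row_step n w S j =
    (case greedy_fill (\<lambda>j. j \<in> S) (cyc_right n) w'
            (sort_key (\<lambda>i. (- w' i, i)) (sorted_list_of_set S')) Map.empty j of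
       Some x \<Rightarrow> x | None \<Rightarrow> c)"
proof -
  obtain Q where take: "take (card S) (col_order n w) = filter (\<lambda>i. i \<in> S') (col_order n w) @ Q"
    and Q: "\<forall>i \<in> set Q. w i = c"
    using col_order_staircase[OF assms(2,4,5,3)] by blast
  define m where "m = greedy_fill (\<lambda>j. j \<in> S) (cyc_right n) w (filter (\<lambda>i. i \<in> S') (col_order n w)) Map.empty"
  have m_eq: "greedy_fill (\<lambda>j. j \<in> S) (cyc_right n) w'
      (sort_key (\<lambda>i. (- w' i, i)) (sorted_list_of_set S')) Map.empty = m"
    unfolding m_def filter_col_order_eq_sort_key[OF assms(2,6), symmetric]
    using assms(6) by (intro greedy_fill_cong) simp
  have labelled: "greedy_fill (\<lambda>j. j \<in> S) (cyc_right n) w Q m j = Some (row_step n w S j)"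
    using particle_phase_eq_row_step[OF assms(1,7), of w]
    by (simp add: particle_phase_def take greedy_fill_append m_def)
  show ?thesis
  proof (cases "m j")
    case None
    then show ?thesis
      using greedy_fill_SomeD[OF labelled None] Q m_eq by auto
  next
    case (Some y)
    then show ?thesis
      using greedy_fill_keeps[of m j y "\<lambda>j. j \<in> S" "cyc_right n" w Q] labelled m_eq by simp
  qed
qed

declare LG.simps [simp del] FM.simps [simp del]

lemma LG_top:
  "length B \<le> r \<Longrightarrow>
    LG n B r = (\<lambda>j. if j \<in> B ! (length B - 1) then int (length B) else int (length B) - 1)"
  by (subst LG.simps) simp

lemma LG_step: "r < length B \<Longrightarrow> LG n B r = row_step n (LG n B (Suc r)) (B ! (r - 1))"
  by (subst LG.simps) simp

lemma FM_top: "length B \<le> r \<Longrightarrow> FM n B r = (\<lambda>j. int r)"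
  by (subst FM.simps) simp

lemma FM_step:
  "r < length B \<Longrightarrow> FM n B r j =
    (case greedy_fill (\<lambda>j. j \<in> B ! (r - 1)) (cyc_right n) (FM n B (Suc r))
            (sort_key (\<lambda>i. (- FM n B (Suc r) i, i)) (sorted_list_of_set (B ! r))) Map.empty j of
       Some x \<Rightarrow> x | None \<Rightarrow> int r)"
  by (subst FM.simps) (simp add: Let_def greedy_fill_def fm_place_eq_claim_first)

lemma GMLQ_length: "B \<in> GMLQ \<alpha> n \<Longrightarrow> length B = length \<alpha>"
  by (simp add: GMLQ_def)

lemma GMLQ_row_subset: "B \<in> GMLQ \<alpha> n \<Longrightarrow> r < length \<alpha> \<Longrightarrow> B ! r \<subseteq> {1..n}"
  by (simp add: GMLQ_def)

lemma GMLQ_card_row: "B \<in> GMLQ \<alpha> n \<Longrightarrow> r < length \<alpha> \<Longrightarrow> card (B ! r) = \<alpha> ! r"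
  by (simp add: GMLQ_def)

lemma LG_anti_less_particle:
  assumes "B \<in> GMLQ \<alpha> n" and "r \<in> {1..length \<alpha>}"
    and "j \<in> B ! (r - 1)" and "j' \<in> {1..n} - B ! (r - 1)"
  shows "LG n B r j' < LG n B r j"
proof (cases "r < length B")
  case True
  have "B ! (r - 1) \<subseteq> {1..n}"
    using assms(1,2) by (intro GMLQ_row_subset) auto
  then show ?thesis
    unfolding LG_step[OF True] using assms(3,4) by (rule row_step_anti_less_particle)
next
  case False
  then show ?thesis
    using assms by (simp add: LG_top GMLQ_length)
qed

lemma LG_eq_FM:
  assumes "B \<in> GMLQ \<alpha> n" and "sorted_wrt (\<ge>) \<alpha>" and "1 \<le> r" and "r \<le> length \<alpha>"
  shows "(\<forall>j \<in> B ! (r - 1). LG n B r j = FM n B r j \<and> int r \<le> LG n B r j)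
    \<and> (\<forall>j \<in> {1..n} - B ! (r - 1). LG n B r j = int r - 1)"
  using assms(4)
proof (induction r rule: inc_induct)
  case base
  then show ?case
    using assms(1,3) by (simp add: LG_top FM_top GMLQ_length)
next
  case (step k)
  let ?w = "LG n B (Suc k)" and ?S = "B ! (k - 1)" and ?S' = "B ! k"
  have k: "k < length \<alpha>" "1 \<le> k"
    using step.hyps assms(3) by simp_all
  then have kB: "k < length B"
    using GMLQ_length[OF assms(1)] by simp
  have S: "?S \<subseteq> {1..n}" and S': "?S' \<subseteq> {1..n}"
    using GMLQ_row_subset[OF assms(1)] k by simp_all
  have "\<alpha> ! k \<le> \<alpha> ! (k - 1)"
    using sorted_wrt_nth_less[OF assms(2), of "k - 1" k] k by simp
  then have card_le: "card ?S' \<le> card ?S"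
    using GMLQ_card_row[OF assms(1)] k by simp
  have above: "\<forall>i \<in> ?S'. int k < ?w i" and level: "\<forall>i \<in> {1..n} - ?S'. ?w i = int k"
    and agree: "\<forall>i \<in> ?S'. ?w i = FM n B (Suc k) i"
    using step.IH by auto
  have "?w i \<ge> int k" if "i \<in> {1..n}" for i
    using above level that by (cases "i \<in> ?S'") auto
  then have "int k \<le> LG n B k j" if "j \<in> ?S" for j
    using row_step_particle_label[OF S that, of ?w] by (auto simp: LG_step[OF kB] dest: in_set_takeD)
  moreover have "LG n B k j = FM n B k j" if "j \<in> ?S" for j
    unfolding LG_step[OF kB] FM_step[OF kB]
    using row_step_particle_staircase[OF S S' card_le above level agree that] .
  moreover have "LG n B k j = int k - 1" if "j \<in> {1..n} - ?S" for j
    unfolding LG_step[OF kB] using row_step_anti_staircase[OF S S' card_le above level that] .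
  ultimately show ?case
    by blast
qed

theorem lemma3p29:
  fixes \<alpha> :: "nat list" and n :: nat and B :: "nat set list"
  assumes "n > 0" and "B \<in> GMLQ \<alpha> n"
  shows "(\<forall>r \<in> {1..length \<alpha>}. \<forall>j \<in> B ! (r - 1). \<forall>j' \<in> {1..n} - B ! (r - 1).
            LG n B r j' < LG n B r j)
       \<and> (sorted_wrt (\<ge>) \<alpha> \<longrightarrow>
            (\<forall>r \<in> {1..length \<alpha>}.
               (\<forall>j \<in> B ! (r - 1). LG n B r j = FM n B r j)
             \<and> (\<forall>j \<in> {1..n} - B ! (r - 1). LG n B r j = int r - 1)))"
  using LG_anti_less_particle[OF assms(2)] LG_eq_FM[OF assms(2)] by auto

end
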